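(* For the RHA process, let $0\le m\le n$ and let $A_{nm}$ be the event that the $2^{n-m}$ consecutive length-$2^m$ blocks $X^m_{2^{n-m}},X^m_{2^{n-m}+1},\dots,X^m_{2^{n-m+1}-1}$ composing $X^n_1$ are pairwise distinct (so $P(A_{nn})=1$). Then $P(A_{nm})=0$ if $k_m<2^{n-m}$, whereas if $k_m\ge2^{n-m}$ and $m<n$, $$P(A_{nm})=P(A_{n,m+1})\,\frac{k_m(k_m-1)\cdots(k_m-2^{n-m}+1)}{k_m^2(k_m^2-1)\cdots(k_m^2-2^{n-m-1}+1)}.$$
   Context: Random hierarchical association (RHA) process. Fix positive integers $(k_n)_{n\ge0}$ (perplexities) with $k_{n-1}\le k_n\le k_{n-1}^2$ for all $n\ge1$. On a probability space $(\Omega,\mathcal J,P)$ let, for each $n\ge1$, $(L_{nj},R_{nj})_{j=1}^{k_n}$ be the lexicographically sorted enumeration of a uniformly random $k_n$-element subset of $\{1,\dots,k_{n-1}\}^2$ (each of the $\binom{k_{n-1}^2}{k_n}$ subsets equally likely), independently over $n$. Let $(C_n)_{n\ge0}$ be independent, independent of all $(L_{nj},R_{nj})$, with $C_n$ uniform on $\{1,\dots,k_n\}$. Define strings $Y^0_j=j$ (length 1) for $1\le j\le k_0$ and $Y^n_j=Y^{n-1}_{L_{nj}}Y^{n-1}_{R_{nj}}$ (concatenation); so $Y^n_1,\dots,Y^n_{k_n}$ are distinct strings of length $2^n$. The RHA process is $\mathcal X=Y^0_{C_0}Y^1_{C_1}Y^2_{C_2}\cdots=X_1X_2X_3\cdots$,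 $X_{k:l}=X_k\cdots X_l$; for $n\ge0$, $j\ge1$, $X^n_j=X_{j2^n:(j+1)2^n-1}$ (so $X^n_1=Y^n_{C_n}$). *)

theory Defs
  imports "HOL-Probability.Probability"
begin

text \<open>Strings Y^n_j of the RHA process for a fixed outcome: S n is the random
k_n-element subset of {1..k_(n-1)}^2 at level n; (L_nj, R_nj) is the j-th
(1-based) element of its lexicographically sorted enumeration.\<close>

definition lexless :: "nat \<times> nat \<Rightarrow> nat \<times> nat \<Rightarrow> bool" where
  "lexless q p \<longleftrightarrow> fst q < fst p \<or> (fst q = fst p \<and> snd q < snd p)"

definition lexEnum :: "(nat \<times> nat) set \<Rightarrow> nat \<Rightarrow> nat \<times> nat" where
  "lexEnum A j = (THE p. p \<in> A \<and> card {q \<in> A. lexless q p} = j - 1)"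

fun rhaY :: "(nat \<Rightarrow> (nat \<times> nat) set) \<Rightarrow> nat \<Rightarrow> nat \<Rightarrow> nat list" where
  "rhaY S 0 j = [j]"
| "rhaY S (Suc n) j =
     (let p = lexEnum (S (Suc n)) j
      in rhaY S n (fst p) @ rhaY S n (snd p))"

text \<open>The process X_1 X_2 ... = Y^0_{C_0} Y^1_{C_1} ...; the symbol X_t (t \<ge> 1) lies in the
block Y^n_{C_n} with 2^n \<le> t < 2^(n+1), at offset t - 2^n.\<close>

definition rhaLevel :: "nat \<Rightarrow> nat" where
  "rhaLevel t = (THE n. 2 ^ n \<le> t \<and> t < 2 ^ Suc n)"

definition rhaX :: "(nat \<Rightarrow> (nat \<times> nat) set) \<Rightarrow> (nat \<Rightarrow> nat) \<Rightarrow> nat \<Rightarrow> nat" where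
  "rhaX S C t = rhaY S (rhaLevel t) (C (rhaLevel t)) ! (t - 2 ^ rhaLevel t)"

definition rhaBlock :: "(nat \<Rightarrow> (nat \<times> nat) set) \<Rightarrow> (nat \<Rightarrow> nat) \<Rightarrow> nat \<Rightarrow> nat \<Rightarrow> nat list" where
  "rhaBlock S C m j = map (rhaX S C) [j * 2 ^ m ..< (j + 1) * 2 ^ m]"

definition rhaA :: "'w set \<Rightarrow> (nat \<Rightarrow> 'w \<Rightarrow> (nat \<times> nat) set) \<Rightarrow> (nat \<Rightarrow> 'w \<Rightarrow> nat)
    \<Rightarrow> nat \<Rightarrow> nat \<Rightarrow> 'w set" where
  "rhaA \<Omega> S C n m = {\<omega> \<in> \<Omega>.
     inj_on (rhaBlock (\<lambda>i. S i \<omega>) (\<lambda>i. C i \<omega>) m) {2 ^ (n - m) ..< 2 ^ (n - m + 1)}}"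

text \<open>All randomness as a single family (indexed by Inl n for the subsets, n \<ge> 1,
and Inr n for the C_n) to express mutual independence.\<close>

definition rhaVars :: "(nat \<Rightarrow> 'w \<Rightarrow> (nat \<times> nat) set) \<Rightarrow> (nat \<Rightarrow> 'w \<Rightarrow> nat)
    \<Rightarrow> nat + nat \<Rightarrow> 'w \<Rightarrow> (nat \<times> nat) set + nat" where
  "rhaVars S C i \<omega> = (case i of Inl n \<Rightarrow> Inl (S n \<omega>) | Inr n \<Rightarrow> Inr (C n \<omega>))"

end

theory Submission
  imports Defs
begin

text \<open>
  The blocks \<open>X\<^sup>m\<^sub>j\<close> composing \<open>X\<^sup>n\<^sub>1 = Y\<^sup>n\<^sub>C\<^sub>n\<close> are the strings \<open>Y\<^sup>m\<^sub>j\<close> for \<open>j\<close> running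
  through a list of \<open>2\<^sup>n\<^sup>-\<^sup>m\<close> indices, obtained from \<open>[C\<^sub>n]\<close> by replacing, level by level, each
  index \<open>j\<close> by the pair \<open>(L\<^sub>j, R\<^sub>j)\<close>. The strings of one level are pairwise distinct, so
  \<open>A\<^sub>n\<^sub>m\<close> is the event that this index list is distinct.

  One level down, the list is determined by the current one and an independent uniform
  \<open>K\<close>-subset \<open>A\<close> of \<open>{1..k'}\<^sup>2\<close>, and a distinct list of \<open>2r\<close> indices has a (unique) distinct
  parent list of length \<open>r\<close> iff its \<open>r\<close> pairs lie in \<open>A\<close>, which happens with probability
  \<open>(K)\<^sub>r / (k'\<^sup>2)\<^sub>r\<close> (falling factorials). By induction the law of the index list is
  therefore uniform on distinct lists, each distinct list at the next level has probability
  \<open>P / (k'\<^sup>2)\<^sub>r\<close> where \<open>P\<close> is the probability that the current list is distinct, and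
  multiplying by the number \<open>(k')\<^sub>2\<^sub>r\<close> of distinct lists gives the recursion. Independence
  turns the finitely many random sets involved into a product pmf, in which this computation
  takes place.
\<close>


section \<open>Lexicographic enumeration\<close>

lemma lexless_trans: "lexless p q \<Longrightarrow> lexless q r \<Longrightarrow> lexless p r"
  by (auto simp: lexless_def)

lemma lexless_irrefl: "\<not> lexless p p"
  by (simp add: lexless_def)

lemma lexless_linear: "p \<noteq> q \<Longrightarrow> lexless p q \<or> lexless q p"
  by (cases p; cases q) (auto simp: lexless_def)

definition lexRank :: "(nat \<times> nat) set \<Rightarrow> nat \<times> nat \<Rightarrow> nat" where
  "lexRank A p = card {q \<in> A. lexless q p}"

lemma lexRank_less:
  assumes "finite A" "p \<in> A" "lexless q p" "q \<in> A"
  shows "lexRank A q < lexRank A p"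
  unfolding lexRank_def
proof (rule psubset_card_mono)
  show "{r \<in> A. lexless r q} \<subset> {r \<in> A. lexless r p}"
    using assms lexless_trans lexless_irrefl by blast
qed (use assms in simp)

lemma lexRank_less_card: "finite A \<Longrightarrow> p \<in> A \<Longrightarrow> lexRank A p < card A"
  unfolding lexRank_def using lexless_irrefl by (intro psubset_card_mono) blast+

lemma inj_on_lexRank: "finite A \<Longrightarrow> inj_on (lexRank A) A"
  by (metis inj_onI lexless_linear lexRank_less nat_neq_iff)

lemma lexRank_image: "finite A \<Longrightarrow> lexRank A ` A = {..<card A}"
  by (intro card_subset_eq) (auto simp: lexRank_less_card card_image inj_on_lexRank)

lemma lexEnum_Suc_lexRank: "finite A \<Longrightarrow> p \<in> A \<Longrightarrow> lexEnum A (Suc (lexRank A p)) = p"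
  unfolding lexEnum_def
  by (rule the_equality) (auto simp: lexRank_def[symmetric] dest: inj_onD[OF inj_on_lexRank])

lemma bij_betw_lexEnum:
  assumes "finite A"
  shows "bij_betw (lexEnum A) {1..card A} A"
proof -
  have "{1..card A} = Suc ` {..<card A}"
    by (simp add: atLeast0LessThan[symmetric] atLeastLessThanSuc_atLeastAtMost[symmetric])
  also have "\<dots> = (\<lambda>p. Suc (lexRank A p)) ` A"
    using lexRank_image[OF assms] by (simp add: image_image[symmetric])
  finally have "lexEnum A ` {1..card A} = A"
    using lexEnum_Suc_lexRank[OF assms] by (simp add: image_image)
  then show ?thesis
    by (simp add: bij_betw_def eq_card_imp_inj_on)
qed


section \<open>Index lists and their expansion\<close>

definition flat_pairs :: "('a \<times> 'a) list \<Rightarrow> 'a list" where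
  "flat_pairs ps = concat (map (\<lambda>(a, b). [a, b]) ps)"

fun pairs_of :: "'a list \<Rightarrow> ('a \<times> 'a) list" where
  "pairs_of (a # b # xs) = (a, b) # pairs_of xs"
| "pairs_of _ = []"

lemma flat_pairs_simps [simp]:
  "flat_pairs [] = []"
  "flat_pairs (p # ps) = fst p # snd p # flat_pairs ps"
  by (auto simp: flat_pairs_def split: prod.split)

lemma pairs_of_flat_pairs [simp]: "pairs_of (flat_pairs ps) = ps"
  by (induction ps) auto

lemma flat_pairs_pairs_of: "even (length xs) \<Longrightarrow> flat_pairs (pairs_of xs) = xs"
  by (induction xs rule: pairs_of.induct) auto

lemma length_flat_pairs [simp]: "length (flat_pairs ps) = 2 * length ps"
  by (induction ps) auto

lemma length_pairs_of: "length (pairs_of xs) = length xs div 2"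
  by (induction xs rule: pairs_of.induct) auto

lemma set_flat_pairs: "set (flat_pairs ps) = fst ` set ps \<union> snd ` set ps"
  by (induction ps) auto

lemma distinct_flat_pairsD: "distinct (flat_pairs ps) \<Longrightarrow> distinct ps"
  by (induction ps) (auto simp: set_flat_pairs)

text \<open>If a word is the concatenation of the strings \<open>Y\<^sup>l\<^sub>j\<close>, \<open>j\<close> in \<open>J\<close>, and \<open>A\<close> is the set of level
  \<open>l\<close>, it is the concatenation of the \<open>Y\<^sup>l\<^sup>-\<^sup>1\<^sub>i\<close>, \<open>i\<close> in \<open>expand_indices A J\<close>: each \<open>j\<close> becomes
  \<open>L\<^sub>l\<^sub>j, R\<^sub>l\<^sub>j\<close>.\<close>

definition expand_indices :: "(nat \<times> nat) set \<Rightarrow> nat list \<Rightarrow> nat list" where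
  "expand_indices A J = flat_pairs (map (lexEnum A) J)"

lemma length_expand_indices [simp]: "length (expand_indices A J) = 2 * length J"
  by (simp add: expand_indices_def)

lemma expand_indices_eq_iff:
  "even (length J') \<Longrightarrow> expand_indices A J = J' \<longleftrightarrow> map (lexEnum A) J = pairs_of J'"
  unfolding expand_indices_def by (metis flat_pairs_pairs_of pairs_of_flat_pairs)

lemma distinct_expand_indicesD: "distinct (expand_indices A J) \<Longrightarrow> distinct J"
  unfolding expand_indices_def using distinct_flat_pairsD distinct_map by blast


section \<open>Counting\<close>

definition falling :: "nat \<Rightarrow> nat \<Rightarrow> real" where
  "falling x r = (\<Prod>i<r. real x - real i)"

lemma falling_eq_fact_choose: "falling x r = fact r * real (x choose r)"
  by (simp add: falling_def binomial_gbinomial gbinomial_prod_rev lessThan_atLeast0)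

lemma falling_eq_0: "x < r \<Longrightarrow> falling x r = 0"
  by (simp add: falling_eq_fact_choose)

definition distinct_lists :: "nat \<Rightarrow> nat \<Rightarrow> nat list set" where
  "distinct_lists K L = {J. length J = L \<and> distinct J \<and> set J \<subseteq> {1..K}}"

lemma finite_distinct_lists: "finite (distinct_lists K L)"
  by (rule finite_subset[OF _ finite_lists_length_eq[of "{1..K}" L]]) (auto simp: distinct_lists_def)

lemma card_distinct_lists: "real (card (distinct_lists K L)) = falling K L"
proof (cases "L \<le> K")
  case True
  have range: "{K - L + 1..K} = (\<lambda>i. K - i) ` {..<L}"
  proof (intro equalityI subsetI)
    fix x assume "x \<in> {K - L + 1..K}"
    then show "x \<in> (\<lambda>i. K - i) ` {..<L}"
      by (intro image_eqI[where x = "K - x"]) auto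
  qed (use True in auto)
  have "card (distinct_lists K L) = \<Prod>{K - L + 1..K}"
    using card_lists_distinct_length_eq[of "{1..K}" L] True by (simp add: distinct_lists_def)
  also have "\<dots> = (\<Prod>i<L. K - i)"
    unfolding range using True
    by (intro prod.reindex_cong[OF inj_onI refl refl]) (metis diff_diff_cancel less_imp_le_nat lessThan_iff order_trans)
  finally have "real (card (distinct_lists K L)) = (\<Prod>i<L. real (K - i))"
    by simp
  also have "\<dots> = falling K L"
    unfolding falling_def using True by (intro prod.cong) auto
  finally show ?thesis .
next
  case False
  have "L \<le> K" if "J \<in> distinct_lists K L" for J
    using that card_mono[of "{1..K}" "set J"] distinct_card[of J] by (simp add: distinct_lists_def)
  then have "distinct_lists K L = {}"
    using False by blast
  then show ?thesis
    using False by (simp add: falling_eq_0)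
qed

definition square_subsets :: "nat \<Rightarrow> nat \<Rightarrow> (nat \<times> nat) set set" where
  "square_subsets k' K = {A. A \<subseteq> {1..k'} \<times> {1..k'} \<and> card A = K}"

lemma finite_square_subsets: "finite (square_subsets k' K)"
  unfolding square_subsets_def by (rule finite_subset[of _ "Pow ({1..k'} \<times> {1..k'})"]) auto

lemma finite_if_square_subsets: "A \<in> square_subsets k' K \<Longrightarrow> finite A"
  unfolding square_subsets_def using finite_subset by blast

lemma card_square_subsets: "card (square_subsets k' K) = k' ^ 2 choose K"
  unfolding square_subsets_def by (subst n_subsets) (simp_all add: power2_eq_square)

lemma square_subsets_nonempty: "K \<le> k' ^ 2 \<Longrightarrow> square_subsets k' K \<noteq> {}"
  using card_square_subsets[of k' K] by (metis card.empty zero_less_binomial_iff not_gr0)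

lemma card_supersets:
  assumes "finite U" "R \<subseteq> U" "card R \<le> K"
  shows "card {A. A \<subseteq> U \<and> card A = K \<and> R \<subseteq> A} = (card U - card R) choose (K - card R)"
proof -
  have "finite R"
    using assms finite_subset by blast
  have "bij_betw (\<lambda>B. B \<union> R) {B. B \<subseteq> U - R \<and> card B = K - card R} {A. A \<subseteq> U \<and> card A = K \<and> R \<subseteq> A}"
  proof (rule bij_betw_byWitness[where f' = "\<lambda>A. A - R"])
    show "(\<lambda>B. B \<union> R) ` {B. B \<subseteq> U - R \<and> card B = K - card R} \<subseteq> {A. A \<subseteq> U \<and> card A = K \<and> R \<subseteq> A}"
    proof clarify
      fix B assume "B \<subseteq> U - R" "card B = K - card R"
      moreover have "finite B"
        using \<open>B \<subseteq> U - R\<close> \<open>finite U\<close> finite_subset by blast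
      ultimately have "card (B \<union> R) = card B + card R"
        using \<open>finite R\<close> by (intro card_Un_disjoint) auto
      then show "B \<union> R \<subseteq> U \<and> card (B \<union> R) = K \<and> R \<subseteq> B \<union> R"
        using assms \<open>B \<subseteq> U - R\<close> \<open>card B = K - card R\<close> by auto
    qed
    show "(\<lambda>A. A - R) ` {A. A \<subseteq> U \<and> card A = K \<and> R \<subseteq> A} \<subseteq> {B. B \<subseteq> U - R \<and> card B = K - card R}"
      using \<open>finite R\<close> by (auto simp: card_Diff_subset)
  qed auto
  then have "card {A. A \<subseteq> U \<and> card A = K \<and> R \<subseteq> A} = card {B. B \<subseteq> U - R \<and> card B = K - card R}"
    by (simp add: bij_betw_same_card)
  also have "\<dots> = card (U - R) choose (K - card R)"
    using assms by (simp add: n_subsets)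
  finally show ?thesis
    using assms \<open>finite R\<close> by (simp add: card_Diff_subset)
qed

lemma binomial_ratio_eq_falling_ratio:
  assumes "r \<le> K" "K \<le> N"
  shows "real ((N - r) choose (K - r)) / real (N choose K) = falling K r / falling N r"
proof -
  have "real (N choose K) * real (K choose r) = real (N choose r) * real ((N - r) choose (K - r))"
    using choose_mult[OF assms] by (metis of_nat_mult)
  moreover have "real (N choose K) > 0" "real (N choose r) > 0"
    using assms by simp_all
  ultimately show ?thesis
    by (simp add: falling_eq_fact_choose field_simps)
qed

lemma card_lexEnum_preimage:
  assumes "finite A" "distinct ps"
  shows "card {J \<in> distinct_lists (card A) (length ps). map (lexEnum A) J = ps} = of_bool (set ps \<subseteq> A)"
proof (cases "set ps \<subseteq> A")
  case True
  have bij: "bij_betw (map (lexEnum A)) (lists {1..card A}) (lists A)"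
    by (rule bij_lists[OF bij_betw_lexEnum[OF assms(1)]])
  then obtain J0 where J0: "J0 \<in> lists {1..card A}" "map (lexEnum A) J0 = ps"
    using True by (metis bij_betw_imp_surj_on imageE in_listsI subsetD)
  have "{J \<in> distinct_lists (card A) (length ps). map (lexEnum A) J = ps} = {J0}"
  proof (intro equalityI subsetI)
    fix J assume "J \<in> {J \<in> distinct_lists (card A) (length ps). map (lexEnum A) J = ps}"
    then show "J \<in> {J0}"
      using J0 bij by (auto simp: distinct_lists_def bij_betw_def dest: inj_onD)
  next
    show "J \<in> {J \<in> distinct_lists (card A) (length ps). map (lexEnum A) J = ps}" if "J \<in> {J0}" for J
      using that J0 assms(2) by (auto simp: distinct_lists_def distinct_map)
  qed
  then show ?thesis
    using True by simp
next
  case False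
  have "set (map (lexEnum A) J) \<subseteq> A" if "J \<in> distinct_lists (card A) (length ps)" for J
    using that bij_betw_lexEnum[OF assms(1)] by (auto simp: distinct_lists_def bij_betw_def)
  then have empty: "{J \<in> distinct_lists (card A) (length ps). map (lexEnum A) J = ps} = {}"
    using False by blast
  show ?thesis
    unfolding empty using False by simp
qed

lemma pairs_of_distinct_list:
  assumes "J' \<in> distinct_lists k' (2 * r)"
  shows "distinct (pairs_of J')" "length (pairs_of J') = r" "set (pairs_of J') \<subseteq> {1..k'} \<times> {1..k'}"
proof -
  have even: "even (length J')"
    using assms by (simp add: distinct_lists_def)
  then have J': "flat_pairs (pairs_of J') = J'"
    by (rule flat_pairs_pairs_of)
  show "distinct (pairs_of J')"
    using assms distinct_flat_pairsD[of "pairs_of J'"] by (simp add: distinct_lists_def J')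
  show "length (pairs_of J') = r"
    using assms by (simp add: distinct_lists_def length_pairs_of)
  show "set (pairs_of J') \<subseteq> {1..k'} \<times> {1..k'}"
    using assms set_flat_pairs[of "pairs_of J'"] by (force simp: distinct_lists_def J')
qed

lemma card_expand_indices_preimage:
  assumes "A \<in> square_subsets k' K" "J' \<in> distinct_lists k' (2 * r)"
  shows "card {J \<in> distinct_lists K r. expand_indices A J = J'} = of_bool (set (pairs_of J') \<subseteq> A)"
proof -
  have "{J \<in> distinct_lists K r. expand_indices A J = J'}
      = {J \<in> distinct_lists (card A) (length (pairs_of J')). map (lexEnum A) J = pairs_of J'}"
    using assms pairs_of_distinct_list(2)[OF assms(2)] expand_indices_eq_iff[of J' A]
    by (auto simp: square_subsets_def distinct_lists_def)
  then show ?thesis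
    using card_lexEnum_preimage[OF finite_if_square_subsets[OF assms(1)] pairs_of_distinct_list(1)[OF assms(2)]]
    by simp
qed

lemma prob_superset_pmf_of_set:
  assumes "finite U" "R \<subseteq> U" "K \<le> card U"
  shows "measure_pmf.prob (pmf_of_set {A. A \<subseteq> U \<and> card A = K}) {A. R \<subseteq> A}
    = falling K (card R) / falling (card U) (card R)"
proof -
  let ?SS = "{A. A \<subseteq> U \<and> card A = K}" and ?SR = "{A. A \<subseteq> U \<and> card A = K \<and> R \<subseteq> A}"
  have card_SS: "card ?SS = card U choose K"
    using assms(1) by (rule n_subsets)
  then have "card ?SS > 0"
    using assms(3) by simp
  then have "?SS \<noteq> {}"
    by (simp add: card_gt_0_iff)
  moreover have "finite ?SS"
    by (rule finite_subset[of _ "Pow U"]) (use assms(1) in auto)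
  moreover have "?SS \<inter> {A. R \<subseteq> A} = ?SR"
    by blast
  ultimately have "measure_pmf.prob (pmf_of_set ?SS) {A. R \<subseteq> A} = card ?SR / (card U choose K)"
    by (simp add: measure_pmf_of_set card_SS)
  also have "\<dots> = falling K (card R) / falling (card U) (card R)"
  proof (cases "card R \<le> K")
    case True
    have "card ?SR = (card U - card R) choose (K - card R)"
      by (rule card_supersets[OF assms(1,2) True])
    then show ?thesis
      by (simp only: binomial_ratio_eq_falling_ratio[OF True assms(3)])
  next
    case False
    have "card R \<le> card A" if "A \<subseteq> U" "R \<subseteq> A" for A
      by (rule card_mono[OF finite_subset[OF that(1) assms(1)] that(2)])
    then have empty: "?SR = {}"
      using False by force
    show ?thesis
      unfolding empty using False by (simp add: falling_eq_0)
  qed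
  finally show ?thesis .
qed

text \<open>Summed over the parent lists \<open>J\<close>, the event that \<open>J\<close> expands to \<open>J'\<close> becomes the event that
  the random set contains the pairs of \<open>J'\<close>, since such a set gives exactly one parent.\<close>

lemma sum_prob_expand_indices_eq:
  assumes J': "J' \<in> distinct_lists k' (2 * r)" and K: "K \<le> k' ^ 2"
  shows "(\<Sum>J\<in>distinct_lists K r.
            measure_pmf.prob (pmf_of_set (square_subsets k' K)) {A. expand_indices A J = J'})
         = falling K r / falling (k' ^ 2) r"
proof -
  let ?SS = "square_subsets k' K" and ?R = "set (pairs_of J')"
  have card_R: "card ?R = r"
    using pairs_of_distinct_list[OF J'] by (simp add: distinct_card)
  have "(\<Sum>J\<in>distinct_lists K r. measure_pmf.prob (pmf_of_set ?SS) {A. expand_indices A J = J'})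
      = (\<Sum>J\<in>distinct_lists K r. \<Sum>A\<in>?SS. of_bool (expand_indices A J = J')) / card ?SS"
    using square_subsets_nonempty[OF K] finite_square_subsets
    by (simp add: measure_pmf_of_set sum_divide_distrib Int_def)
  also have "\<dots> = (\<Sum>A\<in>?SS. of_bool (?R \<subseteq> A)) / card ?SS"
    by (subst sum.swap) (simp add: Int_def finite_distinct_lists card_expand_indices_preimage[OF _ J'])
  also have "\<dots> = measure_pmf.prob (pmf_of_set ?SS) {A. ?R \<subseteq> A}"
    using square_subsets_nonempty[OF K] finite_square_subsets by (simp add: measure_pmf_of_set Int_def)
  also have "\<dots> = falling K r / falling (k' ^ 2) r"
    using prob_superset_pmf_of_set[of "{1..k'} \<times> {1..k'}" ?R K] pairs_of_distinct_list(3)[OF J'] K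
    by (simp add: square_subsets_def card_R power2_eq_square)
  finally show ?thesis .
qed


section \<open>The law of the index lists\<close>

text \<open>\<open>block_indices n S c d\<close> lists the indices \<open>j\<close> of the strings \<open>Y\<^sup>n\<^sup>-\<^sup>d\<^sub>j\<close> whose concatenation is
  \<open>Y\<^sup>n\<^sub>c\<close>.\<close>

fun block_indices :: "nat \<Rightarrow> (nat \<Rightarrow> (nat \<times> nat) set) \<Rightarrow> nat \<Rightarrow> nat \<Rightarrow> nat list" where
  "block_indices n S c 0 = [c]"
| "block_indices n S c (Suc d) = expand_indices (S (n - d)) (block_indices n S c d)"

lemma length_block_indices [simp]: "length (block_indices n S c d) = 2 ^ d"
  by (induction d) auto

lemma block_indices_cong:
  "d \<le> n \<Longrightarrow> (\<And>l. n - d < l \<Longrightarrow> l \<le> n \<Longrightarrow> S l = S' l) \<Longrightarrow> block_indices n S c d = block_indices n S' c d"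
  by (induction d) auto

lemma set_expand_indices_subset:
  assumes "A \<in> square_subsets k' K" "set J \<subseteq> {1..K}"
  shows "set (expand_indices A J) \<subseteq> {1..k'}"
proof -
  have "lexEnum A ` set J \<subseteq> A"
    using assms bij_betw_lexEnum[OF finite_if_square_subsets[OF assms(1)]]
    by (auto simp: square_subsets_def bij_betw_def)
  also have "A \<subseteq> {1..k'} \<times> {1..k'}"
    using assms(1) by (simp add: square_subsets_def)
  finally show ?thesis
    by (force simp: expand_indices_def set_flat_pairs)
qed

definition level_pmf :: "(nat \<Rightarrow> nat) \<Rightarrow> nat \<Rightarrow> (nat \<times> nat) set pmf" where
  "level_pmf k l = pmf_of_set (square_subsets (k (l - 1)) (k l))"

text \<open>The randomness that determines \<open>Y\<^sup>n\<^sub>C\<^sub>n\<close>: the sets of levels \<open>1..n\<close> (with \<open>{}\<close> elsewhere) and \<open>C\<^sub>n\<close>.\<close>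

definition rha_pmf :: "(nat \<Rightarrow> nat) \<Rightarrow> nat \<Rightarrow> ((nat \<Rightarrow> (nat \<times> nat) set) \<times> nat) pmf" where
  "rha_pmf k n = pair_pmf (Pi_pmf {1..n} {} (level_pmf k)) (pmf_of_set {1..k n})"

definition indices_pmf :: "(nat \<Rightarrow> nat) \<Rightarrow> nat \<Rightarrow> nat \<Rightarrow> nat list pmf" where
  "indices_pmf k n d = map_pmf (\<lambda>(S, c). block_indices n S c d) (rha_pmf k n)"

locale perplexities =
  fixes k :: "nat \<Rightarrow> nat"
  assumes k_pos: "\<And>l. 0 < k l"
    and k_le_square: "\<And>l. 1 \<le> l \<Longrightarrow> k l \<le> k (l - 1) ^ 2"
begin

lemma set_level_pmf: "1 \<le> l \<Longrightarrow> set_pmf (level_pmf k l) = square_subsets (k (l - 1)) (k l)"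
  unfolding level_pmf_def using square_subsets_nonempty[OF k_le_square] finite_square_subsets by simp

lemma set_rha_pmf:
  "set_pmf (rha_pmf k n) = PiE_dflt {1..n} {} (\<lambda>l. square_subsets (k (l - 1)) (k l)) \<times> {1..k n}"
proof -
  have "set_pmf (Pi_pmf {1..n} {} (level_pmf k)) = PiE_dflt {1..n} {} (set_pmf \<circ> level_pmf k)"
    by (simp add: set_Pi_pmf)
  also have "\<dots> = PiE_dflt {1..n} {} (\<lambda>l. square_subsets (k (l - 1)) (k l))"
    by (auto simp: PiE_dflt_def set_level_pmf)
  finally show ?thesis
    using k_pos[of n] by (simp add: rha_pmf_def)
qed

lemma finite_set_rha_pmf: "finite (set_pmf (rha_pmf k n))"
  unfolding set_rha_pmf by (intro finite_cartesian_product finite_PiE_dflt finite_square_subsets) simp_all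

lemma indices_pmf_0: "indices_pmf k n 0 = map_pmf (\<lambda>c. [c]) (pmf_of_set {1..k n})"
  unfolding indices_pmf_def rha_pmf_def
  by (simp add: map_pmf_def pair_pmf_def bind_assoc_pmf bind_return_pmf bind_pmf_const)

text \<open>Markov property: given the indices at depth \<open>d\<close>, those at depth \<open>d + 1\<close> depend only on the
  independent set of level \<open>n - d\<close>.\<close>

lemma indices_pmf_Suc:
  assumes "d < n"
  shows "indices_pmf k n (Suc d) =
    indices_pmf k n d \<bind> (\<lambda>J. map_pmf (\<lambda>A. expand_indices A J) (level_pmf k (n - d)))"
proof -
  define l where "l = n - d"
  define B where "B = {1..n} - {l}"
  have "{1..n} = insert l B" "l \<notin> B" "finite B"
    using assms by (auto simp: B_def l_def)
  then have Pi: "Pi_pmf {1..n} {} (level_pmf k) =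
      map_pmf (\<lambda>(A, S). S(l := A)) (pair_pmf (level_pmf k l) (Pi_pmf B {} (level_pmf k)))"
    by (simp add: Pi_pmf_insert)
  have upd: "block_indices n (S(l := A)) c d = block_indices n S c d" for S A c
    using assms by (intro block_indices_cong) (auto simp: l_def)
  let ?R = "Pi_pmf B {} (level_pmf k)" and ?U = "pmf_of_set {1..k n}"
  have "indices_pmf k n (Suc d) = level_pmf k l \<bind> (\<lambda>A. ?R \<bind> (\<lambda>S. ?U \<bind>
      (\<lambda>c. return_pmf (expand_indices A (block_indices n S c d)))))"
    unfolding indices_pmf_def rha_pmf_def Pi
    by (simp add: map_pmf_def pair_pmf_def bind_assoc_pmf bind_return_pmf upd l_def[symmetric])
  also have "\<dots> = ?R \<bind> (\<lambda>S. ?U \<bind> (\<lambda>c. level_pmf k l \<bind>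
      (\<lambda>A. return_pmf (expand_indices A (block_indices n S c d)))))"
    by (simp only: bind_commute_pmf[of "level_pmf k l"])
  also have "\<dots> = indices_pmf k n d \<bind> (\<lambda>J. map_pmf (\<lambda>A. expand_indices A J) (level_pmf k l))"
    unfolding indices_pmf_def rha_pmf_def Pi
    by (simp add: map_pmf_def pair_pmf_def bind_assoc_pmf bind_return_pmf bind_pmf_const upd
        del: block_indices.simps)
  finally show ?thesis
    by (simp add: l_def)
qed

lemma set_indices_pmf:
  "d \<le> n \<Longrightarrow> J \<in> set_pmf (indices_pmf k n d) \<Longrightarrow> length J = 2 ^ d \<and> set J \<subseteq> {1..k (n - d)}"
proof (induction d arbitrary: J)
  case 0
  then show ?case
    using k_pos[of n] by (auto simp: indices_pmf_0)
next
  case (Suc d)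
  obtain J0 A where J0: "J0 \<in> set_pmf (indices_pmf k n d)" and A: "A \<in> set_pmf (level_pmf k (n - d))"
    and J: "J = expand_indices A J0"
    using Suc.prems by (auto simp: indices_pmf_Suc[of d n])
  have "n - d - 1 = n - Suc d"
    by simp
  then have "A \<in> square_subsets (k (n - Suc d)) (k (n - d))"
    using A Suc.prems(1) set_level_pmf[of "n - d"] by simp
  moreover have "length J0 = 2 ^ d \<and> set J0 \<subseteq> {1..k (n - d)}"
    using Suc.IH[OF _ J0] Suc.prems(1) by simp
  ultimately show ?case
    using J set_expand_indices_subset by simp
qed

lemma pmf_indices_pmf_Suc:
  assumes "d < n" and J': "J' \<in> distinct_lists (k (n - Suc d)) (2 ^ Suc d)"
    and uniform: "\<And>J. J \<in> distinct_lists (k (n - d)) (2 ^ d) \<Longrightarrow> pmf (indices_pmf k n d) J = b"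
  shows "pmf (indices_pmf k n (Suc d)) J' = b * (falling (k (n - d)) (2 ^ d) / falling (k (n - Suc d) ^ 2) (2 ^ d))"
proof -
  let ?p = "\<lambda>J. measure_pmf.prob (level_pmf k (n - d)) {A. expand_indices A J = J'}"
  have "pmf (indices_pmf k n (Suc d)) J' = (\<integral>J. ?p J \<partial>indices_pmf k n d)"
    unfolding indices_pmf_Suc[OF assms(1)] pmf_bind by (simp add: pmf_map vimage_def)
  also have "\<dots> = (\<Sum>J\<in>distinct_lists (k (n - d)) (2 ^ d). ?p J * pmf (indices_pmf k n d) J)"
  proof (rule integral_measure_pmf_real[OF finite_distinct_lists])
    fix J assume "J \<in> set_pmf (indices_pmf k n d)" "?p J \<noteq> 0"
    then have "{A. expand_indices A J = J'} \<noteq> {}"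
      by (metis measure_empty)
    then obtain A where "expand_indices A J = J'"
      by blast
    then have "distinct J"
      using J' distinct_expand_indicesD by (auto simp: distinct_lists_def)
    then show "J \<in> distinct_lists (k (n - d)) (2 ^ d)"
      using set_indices_pmf[of d n J] \<open>J \<in> set_pmf (indices_pmf k n d)\<close> assms(1)
      by (simp add: distinct_lists_def)
  qed
  also have "\<dots> = b * (\<Sum>J\<in>distinct_lists (k (n - d)) (2 ^ d). ?p J)"
    unfolding sum_distrib_left by (intro sum.cong) (simp_all add: uniform)
  also have "(\<Sum>J\<in>distinct_lists (k (n - d)) (2 ^ d). ?p J)
      = falling (k (n - d)) (2 ^ d) / falling (k (n - Suc d) ^ 2) (2 ^ d)"
  proof -
    have "n - d - 1 = n - Suc d"
      by simp
    then have "k (n - d) \<le> k (n - Suc d) ^ 2"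
      using k_le_square[of "n - d"] assms(1) by simp
    moreover have "J' \<in> distinct_lists (k (n - Suc d)) (2 * 2 ^ d)"
      using J' by simp
    ultimately show ?thesis
      unfolding level_pmf_def \<open>n - d - 1 = n - Suc d\<close> by (rule sum_prob_expand_indices_eq[rotated])
  qed
  finally show ?thesis .
qed

lemma pmf_indices_pmf_uniform:
  "d \<le> n \<Longrightarrow> \<exists>b. \<forall>J\<in>distinct_lists (k (n - d)) (2 ^ d). pmf (indices_pmf k n d) J = b"
proof (induction d)
  case 0
  have "pmf (indices_pmf k n 0) [c] = 1 / k n" if "c \<in> {1..k n}" for c
    using that k_pos[of n] by (simp add: indices_pmf_0 pmf_map vimage_def measure_pmf_of_set)
  then show ?case
    by (auto simp: distinct_lists_def length_Suc_conv)
next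
  case (Suc d)
  then show ?case
    using pmf_indices_pmf_Suc by (metis Suc_le_lessD Suc_leD)
qed

lemma prob_distinct_indices:
  assumes "d \<le> n" and uniform: "\<And>J. J \<in> distinct_lists (k (n - d)) (2 ^ d) \<Longrightarrow> pmf (indices_pmf k n d) J = b"
  shows "measure_pmf.prob (indices_pmf k n d) {J. distinct J} = b * falling (k (n - d)) (2 ^ d)"
proof -
  have "{J. distinct J} \<inter> set_pmf (indices_pmf k n d) = distinct_lists (k (n - d)) (2 ^ d) \<inter> set_pmf (indices_pmf k n d)"
    using set_indices_pmf[OF assms(1)] by (auto simp: distinct_lists_def)
  then have "measure_pmf.prob (indices_pmf k n d) {J. distinct J}
      = measure_pmf.prob (indices_pmf k n d) (distinct_lists (k (n - d)) (2 ^ d))"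
    by (metis measure_Int_set_pmf)
  also have "\<dots> = b * falling (k (n - d)) (2 ^ d)"
    by (simp add: measure_measure_pmf_finite finite_distinct_lists uniform card_distinct_lists)
  finally show ?thesis .
qed

lemma prob_distinct_indices_Suc:
  assumes "d < n"
  shows "measure_pmf.prob (indices_pmf k n (Suc d)) {J. distinct J} =
    measure_pmf.prob (indices_pmf k n d) {J. distinct J} *
      (falling (k (n - Suc d)) (2 ^ Suc d) / falling (k (n - Suc d) ^ 2) (2 ^ d))"
proof -
  obtain b where b: "\<And>J. J \<in> distinct_lists (k (n - d)) (2 ^ d) \<Longrightarrow> pmf (indices_pmf k n d) J = b"
    using pmf_indices_pmf_uniform assms by (meson less_imp_le)
  show ?thesis
    using prob_distinct_indices[OF _ b] prob_distinct_indices[OF _ pmf_indices_pmf_Suc[OF assms _ b]] assms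
    by simp
qed

lemma prob_distinct_indices_eq_0:
  assumes "d \<le> n" "k (n - d) < 2 ^ d"
  shows "measure_pmf.prob (indices_pmf k n d) {J. distinct J} = 0"
proof -
  obtain b where "\<And>J. J \<in> distinct_lists (k (n - d)) (2 ^ d) \<Longrightarrow> pmf (indices_pmf k n d) J = b"
    using pmf_indices_pmf_uniform assms by meson
  then show ?thesis
    using prob_distinct_indices assms by (simp add: falling_eq_0)
qed

end


section \<open>Blocks of the process\<close>

lemma length_rhaY [simp]: "length (rhaY S l j) = 2 ^ l"
  by (induction l arbitrary: j) (auto simp: Let_def)

lemma concat_map_rhaY_Suc:
  "concat (map (rhaY S (Suc l)) J) = concat (map (rhaY S l) (expand_indices (S (Suc l)) J))"
  by (induction J) (auto simp: expand_indices_def Let_def)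

lemma rhaY_eq_concat_block_indices:
  "d \<le> n \<Longrightarrow> rhaY S n c = concat (map (rhaY S (n - d)) (block_indices n S c d))"
proof (induction d)
  case (Suc d)
  have "n - d = Suc (n - Suc d)"
    using Suc.prems by simp
  have "rhaY S n c = concat (map (rhaY S (n - d)) (block_indices n S c d))"
    using Suc by simp
  also have "\<dots> = concat (map (rhaY S (n - Suc d)) (expand_indices (S (n - d)) (block_indices n S c d)))"
    unfolding \<open>n - d = Suc (n - Suc d)\<close> by (rule concat_map_rhaY_Suc)
  finally show ?case
    by simp
qed simp

lemma nth_concat_equal_length:
  assumes "\<forall>xs\<in>set xss. length xs = b" "i < length xss" "s < b"
  shows "concat xss ! (i * b + s) = xss ! i ! s"
  using assms
proof (induction xss arbitrary: i)
  case (Cons xs xss)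
  show ?case
  proof (cases i)
    case (Suc i')
    have "concat (xs # xss) ! (i * b + s) = concat xss ! (i' * b + s)"
      using Cons.prems(1) Suc by (simp add: nth_append add.assoc)
    then show ?thesis
      using Cons Suc by simp
  qed (use Cons.prems in \<open>simp add: nth_append\<close>)
qed simp

lemma rhaLevel_eq:
  assumes "2 ^ n \<le> t" "t < 2 ^ Suc n"
  shows "rhaLevel t = n"
  unfolding rhaLevel_def
proof (rule the_equality)
  fix n' assume "2 ^ n' \<le> t \<and> t < 2 ^ Suc n'"
  then have "(2::nat) ^ n < 2 ^ Suc n'" "(2::nat) ^ n' < 2 ^ Suc n"
    using assms by linarith+
  then show "n' = n"
    by (simp only: power_strict_increasing_iff[of "2::nat"])
qed (use assms in simp)

lemma rhaBlock_eq_rhaY: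
  assumes "m \<le> n" "i < 2 ^ (n - m)"
  shows "rhaBlock S C m (2 ^ (n - m) + i) = rhaY S m (block_indices n S (C n) (n - m) ! i)"
proof (rule nth_equalityI)
  have pow: "(2::nat) ^ (n - m) * 2 ^ m = 2 ^ n"
    using assms(1) by (simp flip: power_add)
  show "length (rhaBlock S C m (2 ^ (n - m) + i)) = length (rhaY S m (block_indices n S (C n) (n - m) ! i))"
    by (simp add: rhaBlock_def algebra_simps)
  fix s assume "s < length (rhaBlock S C m (2 ^ (n - m) + i))"
  then have s: "s < 2 ^ m"
    by (simp add: rhaBlock_def algebra_simps)
  have t: "(2 ^ (n - m) + i) * 2 ^ m + s = 2 ^ n + (i * 2 ^ m + s)"
    using pow by (simp add: algebra_simps)
  have "i * 2 ^ m + s < Suc i * 2 ^ m"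
    using s by simp
  also have "\<dots> \<le> 2 ^ (n - m) * 2 ^ m"
    using assms(2) by (intro mult_le_mono1) simp
  finally have level: "rhaLevel ((2 ^ (n - m) + i) * 2 ^ m + s) = n"
    unfolding t pow by (intro rhaLevel_eq) simp_all
  have "rhaBlock S C m (2 ^ (n - m) + i) ! s = rhaX S C ((2 ^ (n - m) + i) * 2 ^ m + s)"
    using s by (simp add: rhaBlock_def)
  also have "\<dots> = rhaY S n (C n) ! (i * 2 ^ m + s)"
    unfolding rhaX_def level by (simp add: t)
  also have "\<dots> = concat (map (rhaY S m) (block_indices n S (C n) (n - m))) ! (i * 2 ^ m + s)"
    using rhaY_eq_concat_block_indices[of "n - m" n S "C n"] assms(1) by simp
  also have "\<dots> = rhaY S m (block_indices n S (C n) (n - m) ! i) ! s"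
    using assms(2) s by (subst nth_concat_equal_length) auto
  finally show "rhaBlock S C m (2 ^ (n - m) + i) ! s = rhaY S m (block_indices n S (C n) (n - m) ! i) ! s" .
qed

lemma map_rhaBlock_eq:
  "m \<le> n \<Longrightarrow> map (rhaBlock S C m) [2 ^ (n - m) ..< 2 ^ (n - m + 1)]
    = map (rhaY S m) (block_indices n S (C n) (n - m))"
  by (rule nth_equalityI) (simp_all add: rhaBlock_eq_rhaY)

definition admissible_sets :: "(nat \<Rightarrow> nat) \<Rightarrow> nat \<Rightarrow> (nat \<Rightarrow> (nat \<times> nat) set) \<Rightarrow> bool" where
  "admissible_sets k n S \<longleftrightarrow> (\<forall>l\<in>{1..n}. S l \<in> square_subsets (k (l - 1)) (k l))"

lemma admissible_setsD:
  "admissible_sets k n S \<Longrightarrow> 1 \<le> l \<Longrightarrow> l \<le> n \<Longrightarrow> S l \<in> square_subsets (k (l - 1)) (k l)"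
  by (simp add: admissible_sets_def)

lemma inj_on_rhaY:
  assumes "admissible_sets k n S"
  shows "l \<le> n \<Longrightarrow> inj_on (rhaY S l) {1..k l}"
proof (induction l)
  case 0
  show ?case
    by (simp add: inj_on_def)
next
  case (Suc l)
  let ?A = "S (Suc l)"
  have A: "?A \<in> square_subsets (k l) (k (Suc l))"
    using admissible_setsD[OF assms, of "Suc l"] Suc.prems by simp
  then have "card ?A = k (Suc l)"
    by (simp add: square_subsets_def)
  then have bij: "bij_betw (lexEnum ?A) {1..k (Suc l)} ?A"
    using bij_betw_lexEnum[OF finite_if_square_subsets[OF A]] by simp
  have in_square: "lexEnum ?A x \<in> {1..k l} \<times> {1..k l}" if "x \<in> {1..k (Suc l)}" for x
    using bij_betw_apply[OF bij that] A by (auto simp: square_subsets_def)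
  show ?case
  proof (rule inj_onI)
    fix x y assume x: "x \<in> {1..k (Suc l)}" and y: "y \<in> {1..k (Suc l)}"
      and eq: "rhaY S (Suc l) x = rhaY S (Suc l) y"
    have "rhaY S l (fst (lexEnum ?A x)) = rhaY S l (fst (lexEnum ?A y))"
      "rhaY S l (snd (lexEnum ?A x)) = rhaY S l (snd (lexEnum ?A y))"
      using eq by (simp_all add: Let_def append_eq_append_conv)
    moreover have "inj_on (rhaY S l) {1..k l}"
      using Suc by simp
    ultimately have "lexEnum ?A x = lexEnum ?A y"
      using in_square[OF x] in_square[OF y] by (metis inj_onD mem_Times_iff prod_eq_iff)
    then show "x = y"
      using bij_betw_imp_inj_on[OF bij] x y by (simp add: inj_on_eq_iff)
  qed
qed

lemma set_block_indices:
  assumes "admissible_sets k n S" "c \<in> {1..k n}"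
  shows "d \<le> n \<Longrightarrow> set (block_indices n S c d) \<subseteq> {1..k (n - d)}"
proof (induction d)
  case (Suc d)
  have "n - d - 1 = n - Suc d"
    by simp
  then have "S (n - d) \<in> square_subsets (k (n - Suc d)) (k (n - d))"
    using admissible_setsD[OF assms(1), of "n - d"] Suc.prems by simp
  moreover have "set (block_indices n S c d) \<subseteq> {1..k (n - d)}"
    using Suc by simp
  ultimately show ?case
    using set_expand_indices_subset by simp
qed (use assms(2) in simp)

lemma inj_on_rhaBlock_iff_distinct:
  assumes "m \<le> n" "admissible_sets k n S" "C n \<in> {1..k n}"
  shows "inj_on (rhaBlock S C m) {2 ^ (n - m) ..< 2 ^ (n - m + 1)}
    \<longleftrightarrow> distinct (block_indices n S (C n) (n - m))"
proof -
  have "inj_on (rhaY S m) (set (block_indices n S (C n) (n - m)))"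
    using inj_on_rhaY[OF assms(2,1)] set_block_indices[OF assms(2,3), of "n - m"] assms(1)
    by (simp add: inj_on_subset)
  then have "distinct (map (rhaY S m) (block_indices n S (C n) (n - m)))
      \<longleftrightarrow> distinct (block_indices n S (C n) (n - m))"
    by (simp add: distinct_map)
  moreover have "inj_on (rhaBlock S C m) {2 ^ (n - m) ..< 2 ^ (n - m + 1)}
      \<longleftrightarrow> distinct (map (rhaBlock S C m) [2 ^ (n - m) ..< 2 ^ (n - m + 1)])"
    by (simp add: distinct_map)
  ultimately show ?thesis
    using map_rhaBlock_eq[OF assms(1), of S C] by simp
qed


section \<open>From the probability space to the finite model\<close>

lemma measurable_count_space_comp2:
  fixes f :: "'w \<Rightarrow> 'a::countable"
  assumes "f \<in> measurable M (count_space UNIV)" "g \<in> measurable M (count_space UNIV)"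
  shows "(\<lambda>x. h (f x) (g x)) \<in> measurable M (count_space UNIV)"
proof (rule measurable_compose_countable[where f = "\<lambda>a x. h a (g x)", OF _ assms(1)])
  show "(\<lambda>x. h a (g x)) \<in> measurable M (count_space UNIV)" for a
    using measurable_compose[OF assms(2) measurable_count_space[of "h a" UNIV]] by (simp add: o_def)
qed

lemma measurable_count_space_comp:
  assumes "g \<in> measurable M (count_space UNIV)"
  shows "(\<lambda>x. h (g x)) \<in> measurable M (count_space UNIV)"
  using measurable_compose[OF assms measurable_count_space[of h UNIV]] by (simp add: o_def)

lemma measurable_map_list:
  fixes F :: "'t \<Rightarrow> 'w \<Rightarrow> 'a::countable"
  assumes "\<And>t. F t \<in> measurable M (count_space UNIV)"
  shows "(\<lambda>x. map (\<lambda>t. F t x) ts) \<in> measurable M (count_space UNIV)"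
proof (induction ts)
  case (Cons t ts)
  then show ?case
    using measurable_count_space_comp2[OF assms[of t] Cons, of Cons] by simp
qed simp

text \<open>The type of sets is uncountable, so the joint measurability of several \<open>S l\<close> is not
  available; instead measurability goes through the countably-valued lookups
  \<open>lexEnum (S l \<omega>) j\<close>.\<close>

lemma measurable_rhaY:
  assumes S: "\<And>l. 1 \<le> l \<Longrightarrow> S l \<in> measurable M (count_space UNIV)"
    and g: "g \<in> measurable M (count_space UNIV)"
  shows "(\<lambda>\<omega>. rhaY (\<lambda>i. S i \<omega>) l (g \<omega>)) \<in> measurable M (count_space UNIV)"
  using g
proof (induction l arbitrary: g)
  case 0
  then show ?case
    by (simp add: measurable_count_space_comp)
next
  case (Suc l)
  let ?p = "\<lambda>\<omega>. lexEnum (S (Suc l) \<omega>) (g \<omega>)"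
  have p: "?p \<in> measurable M (count_space UNIV)"
    using measurable_count_space_comp2[OF Suc.prems S, of "Suc l" "\<lambda>j A. lexEnum A j"] by simp
  have "(\<lambda>\<omega>. rhaY (\<lambda>i. S i \<omega>) l (fst (?p \<omega>))) \<in> measurable M (count_space UNIV)"
    "(\<lambda>\<omega>. rhaY (\<lambda>i. S i \<omega>) l (snd (?p \<omega>))) \<in> measurable M (count_space UNIV)"
    by (rule Suc.IH, rule measurable_count_space_comp[OF p])+
  from measurable_count_space_comp2[OF this, of "(@)"] show ?case
    by (simp add: Let_def)
qed

lemma sets_rhaA:
  assumes "\<And>l. 1 \<le> l \<Longrightarrow> S l \<in> measurable M (count_space UNIV)"
    and "\<And>l. C l \<in> measurable M (count_space UNIV)"
  shows "rhaA (space M) S C n m \<in> sets M"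
proof -
  let ?blocks = "\<lambda>\<omega>. map (rhaBlock (\<lambda>i. S i \<omega>) (\<lambda>i. C i \<omega>) m) [2 ^ (n - m) ..< 2 ^ (n - m + 1)]"
  have "(\<lambda>\<omega>. rhaX (\<lambda>i. S i \<omega>) (\<lambda>i. C i \<omega>) t) \<in> measurable M (count_space UNIV)" for t
    unfolding rhaX_def by (rule measurable_count_space_comp[OF measurable_rhaY[OF assms]])
  then have "(\<lambda>\<omega>. rhaBlock (\<lambda>i. S i \<omega>) (\<lambda>i. C i \<omega>) m j) \<in> measurable M (count_space UNIV)" for j
    unfolding rhaBlock_def by (rule measurable_map_list)
  then have "?blocks \<in> measurable M (count_space UNIV)"
    by (rule measurable_map_list)
  moreover have "rhaA (space M) S C n m = ?blocks -` {xs. distinct xs} \<inter> space M"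
    by (auto simp: rhaA_def distinct_map)
  ultimately show ?thesis
    by (simp add: measurable_sets)
qed

definition rha_choices :: "(nat \<Rightarrow> 'w \<Rightarrow> (nat \<times> nat) set) \<Rightarrow> (nat \<Rightarrow> 'w \<Rightarrow> nat) \<Rightarrow> nat \<Rightarrow> 'w
    \<Rightarrow> (nat \<Rightarrow> (nat \<times> nat) set) \<times> nat" where
  "rha_choices S C n \<omega> = ((\<lambda>i. if i \<in> {1..n} then S i \<omega> else {}), C n \<omega>)"

locale rha = perplexities k + prob_space M
  for k :: "nat \<Rightarrow> nat" and M :: "'w measure" +
  fixes S :: "nat \<Rightarrow> 'w \<Rightarrow> (nat \<times> nat) set" and C :: "nat \<Rightarrow> 'w \<Rightarrow> nat"
  assumes S_meas: "\<And>n. n \<ge> 1 \<Longrightarrow> S n \<in> measurable M (count_space UNIV)"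
    and S_unif: "\<And>n. n \<ge> 1 \<Longrightarrow> distr M (count_space UNIV) (S n) =
        measure_pmf (pmf_of_set {A. A \<subseteq> {1..k (n - 1)} \<times> {1..k (n - 1)} \<and> card A = k n})"
    and C_meas: "\<And>n. C n \<in> measurable M (count_space UNIV)"
    and C_unif: "\<And>n. distr M (count_space UNIV) (C n) = measure_pmf (pmf_of_set {1..k n})"
    and indep: "indep_vars (\<lambda>_. count_space UNIV) (rhaVars S C) (Inl ` {1..} \<union> range Inr)"
begin

lemma prob_S_eq: "1 \<le> l \<Longrightarrow> prob (S l -` {A} \<inter> space M) = pmf (level_pmf k l) A"
  using measure_distr[OF S_meas, of l "{A}", symmetric] S_unif[of l]
  by (simp add: level_pmf_def square_subsets_def measure_pmf_single)

lemma prob_C_eq: "prob (C n -` {c} \<inter> space M) = pmf (pmf_of_set {1..k n}) c"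
  using measure_distr[OF C_meas[of n], of "{c}", symmetric] C_unif[of n]
  by (simp add: measure_pmf_single)

lemma prob_rha_choices_eq:
  assumes "(f, c) \<in> set_pmf (rha_pmf k n)"
  shows "{\<omega> \<in> space M. rha_choices S C n \<omega> = (f, c)} \<in> events"
    and "prob {\<omega> \<in> space M. rha_choices S C n \<omega> = (f, c)} = pmf (rha_pmf k n) (f, c)"
proof -
  let ?I = "Inl ` {1..n} \<union> {Inr n}"
  define B where "B i = (case i of Inl l \<Rightarrow> {Inl (f l)} | Inr _ \<Rightarrow> {Inr c})" for i :: "nat + nat"
  let ?E = "\<lambda>i. rhaVars S C i -` B i \<inter> space M"
  have f: "f l = {}" if "l \<notin> {1..n}" for l
    using assms that by (auto simp: set_rha_pmf PiE_dflt_def)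
  have E_Inl: "?E (Inl l) = S l -` {f l} \<inter> space M" for l
    by (auto simp: B_def rhaVars_def)
  have E_Inr: "?E (Inr n) = C n -` {c} \<inter> space M"
    by (auto simp: B_def rhaVars_def)
  have eq: "{\<omega> \<in> space M. rha_choices S C n \<omega> = (f, c)} = (\<Inter>i\<in>?I. ?E i)"
    using f by (auto simp: rha_choices_def fun_eq_iff B_def rhaVars_def)
  have "?I \<subseteq> Inl ` {1..} \<union> range Inr"
    by auto
  then have rv: "rhaVars S C i \<in> measurable M (count_space UNIV)" if "i \<in> ?I" for i
    using indep that unfolding indep_vars_def by blast
  show "{\<omega> \<in> space M. rha_choices S C n \<omega> = (f, c)} \<in> events"
    unfolding eq using rv by (intro sets.finite_INT) (auto intro: measurable_sets)
  have "prob (\<Inter>i\<in>?I. ?E i) = (\<Prod>i\<in>?I. prob (?E i))"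
    by (rule indep_varsD[OF indep]) auto
  also have "\<dots> = (\<Prod>i\<in>Inl ` {1..n}. prob (?E i)) * (\<Prod>i\<in>{Inr n}. prob (?E i))"
    by (rule prod.union_disjoint) auto
  also have "\<dots> = (\<Prod>l\<in>{1..n}. prob (S l -` {f l} \<inter> space M)) * prob (C n -` {c} \<inter> space M)"
    by (simp add: prod.reindex E_Inl E_Inr)
  also have "\<dots> = pmf (rha_pmf k n) (f, c)"
    using f by (simp add: prob_S_eq prob_C_eq rha_pmf_def pmf_pair pmf_Pi)
  finally show "prob {\<omega> \<in> space M. rha_choices S C n \<omega> = (f, c)} = pmf (rha_pmf k n) (f, c)"
    unfolding eq .
qed

lemma prob_rha_choices_in:
  "{\<omega> \<in> space M. rha_choices S C n \<omega> \<in> set_pmf (rha_pmf k n) \<inter> E} \<in> events"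
  "prob {\<omega> \<in> space M. rha_choices S C n \<omega> \<in> set_pmf (rha_pmf k n) \<inter> E} = measure_pmf.prob (rha_pmf k n) E"
proof -
  let ?V = "set_pmf (rha_pmf k n) \<inter> E"
  let ?F = "\<lambda>v. {\<omega> \<in> space M. rha_choices S C n \<omega> = v}"
  have fin: "finite ?V"
    using finite_set_rha_pmf by blast
  have V: "?F v \<in> events" "prob (?F v) = pmf (rha_pmf k n) v" if "v \<in> ?V" for v
    using prob_rha_choices_eq[of "fst v" "snd v"] that by auto
  have eq: "{\<omega> \<in> space M. rha_choices S C n \<omega> \<in> ?V} = (\<Union>v\<in>?V. ?F v)"
    by auto
  show "{\<omega> \<in> space M. rha_choices S C n \<omega> \<in> ?V} \<in> events"
    unfolding eq using fin V by (intro sets.finite_UN) auto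
  have "prob (\<Union>v\<in>?V. ?F v) = (\<Sum>v\<in>?V. prob (?F v))"
    using fin V by (intro finite_measure_finite_Union) (auto simp: disjoint_family_on_def)
  also have "\<dots> = measure_pmf.prob (rha_pmf k n) ?V"
    using fin V by (simp add: measure_measure_pmf_finite)
  also have "\<dots> = measure_pmf.prob (rha_pmf k n) E"
    by (metis inf_commute measure_Int_set_pmf)
  finally show "prob {\<omega> \<in> space M. rha_choices S C n \<omega> \<in> ?V} = measure_pmf.prob (rha_pmf k n) E"
    unfolding eq .
qed

lemma AE_rha_choices: "AE \<omega> in M. rha_choices S C n \<omega> \<in> set_pmf (rha_pmf k n)"
proof -
  have "prob {\<omega> \<in> space M. rha_choices S C n \<omega> \<in> set_pmf (rha_pmf k n)} = 1"
    using prob_rha_choices_in(2)[of n UNIV] by simp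
  from AE_prob_1[OF this] show ?thesis
    by eventually_elim simp
qed

lemma prob_rhaA:
  assumes "m \<le> n"
  shows "prob (rhaA (space M) S C n m) = measure_pmf.prob (indices_pmf k n (n - m)) {J. distinct J}"
proof -
  let ?E = "{(f, c). distinct (block_indices n f c (n - m))}"
  have iff: "\<omega> \<in> rhaA (space M) S C n m \<longleftrightarrow> \<omega> \<in> {\<omega> \<in> space M. rha_choices S C n \<omega> \<in> set_pmf (rha_pmf k n) \<inter> ?E}"
    if "\<omega> \<in> space M" "rha_choices S C n \<omega> \<in> set_pmf (rha_pmf k n)" for \<omega>
  proof -
    have "admissible_sets k n (\<lambda>i. S i \<omega>)" "C n \<omega> \<in> {1..k n}"
      using that(2) by (auto simp: set_rha_pmf rha_choices_def admissible_sets_def PiE_dflt_def)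
    moreover have "block_indices n (fst (rha_choices S C n \<omega>)) (C n \<omega>) (n - m)
        = block_indices n (\<lambda>i. S i \<omega>) (C n \<omega>) (n - m)"
      by (rule block_indices_cong) (auto simp: rha_choices_def)
    ultimately show ?thesis
      using that inj_on_rhaBlock_iff_distinct[OF assms, of k "\<lambda>i. S i \<omega>" "\<lambda>i. C i \<omega>"]
      by (auto simp: rhaA_def rha_choices_def)
  qed
  have "AE \<omega> in M. \<omega> \<in> rhaA (space M) S C n m
      \<longleftrightarrow> \<omega> \<in> {\<omega> \<in> space M. rha_choices S C n \<omega> \<in> set_pmf (rha_pmf k n) \<inter> ?E}"
    using AE_rha_choices[of n] AE_space by eventually_elim (rule iff)
  then have "prob (rhaA (space M) S C n m)
      = prob {\<omega> \<in> space M. rha_choices S C n \<omega> \<in> set_pmf (rha_pmf k n) \<inter> ?E}"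
    by (rule measure_eq_AE[OF _ sets_rhaA[OF S_meas C_meas] prob_rha_choices_in(1)])
  also have "\<dots> = measure_pmf.prob (rha_pmf k n) ?E"
    by (rule prob_rha_choices_in(2))
  also have "\<dots> = measure_pmf.prob (indices_pmf k n (n - m)) {J. distinct J}"
    by (simp add: indices_pmf_def case_prod_beta')
  finally show ?thesis .
qed

lemma prob_rhaA_eq_0: "m \<le> n \<Longrightarrow> k m < 2 ^ (n - m) \<Longrightarrow> prob (rhaA (space M) S C n m) = 0"
  using prob_rhaA prob_distinct_indices_eq_0 by simp

lemma prob_rhaA_recursion:
  assumes "m < n"
  shows "prob (rhaA (space M) S C n m) =
    prob (rhaA (space M) S C n (m + 1)) * (falling (k m) (2 ^ (n - m)) / falling (k m ^ 2) (2 ^ (n - m - 1)))"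
proof -
  define d where "d = n - Suc m"
  have d: "n - m = Suc d" "n - Suc d = m" "n - (m + 1) = d" "d < n"
    using assms by (auto simp: d_def)
  have "prob (rhaA (space M) S C n m) = measure_pmf.prob (indices_pmf k n (Suc d)) {J. distinct J}"
    using prob_rhaA[of m n] assms d(1) by simp
  also have "\<dots> = measure_pmf.prob (indices_pmf k n d) {J. distinct J} *
      (falling (k m) (2 ^ Suc d) / falling (k m ^ 2) (2 ^ d))"
    by (simp only: prob_distinct_indices_Suc[OF d(4)] d(2))
  also have "measure_pmf.prob (indices_pmf k n d) {J. distinct J} = prob (rhaA (space M) S C n (m + 1))"
    using prob_rhaA[of "m + 1" n] assms d(3) by simp
  finally show ?thesis
    by (simp only: d(1) diff_Suc_1)
qed

end

theorem proposition5:
  fixes M :: "'w measure"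
    and k :: "nat \<Rightarrow> nat"
    and S :: "nat \<Rightarrow> 'w \<Rightarrow> (nat \<times> nat) set"
    and C :: "nat \<Rightarrow> 'w \<Rightarrow> nat"
    and m n :: nat
  assumes "prob_space M"
    and k_pos: "\<And>n. k n > 0"
    and k_mono: "\<And>n. n \<ge> 1 \<Longrightarrow> k (n - 1) \<le> k n \<and> k n \<le> k (n - 1) ^ 2"
    and S_meas: "\<And>n. n \<ge> 1 \<Longrightarrow> S n \<in> measurable M (count_space UNIV)"
    and S_unif: "\<And>n. n \<ge> 1 \<Longrightarrow> distr M (count_space UNIV) (S n) =
        measure_pmf (pmf_of_set {A. A \<subseteq> {1..k (n - 1)} \<times> {1..k (n - 1)} \<and> card A = k n})"
    and C_meas: "\<And>n. C n \<in> measurable M (count_space UNIV)"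
    and C_unif: "\<And>n. distr M (count_space UNIV) (C n) = measure_pmf (pmf_of_set {1..k n})"
    and indep: "prob_space.indep_vars M (\<lambda>_. count_space UNIV) (rhaVars S C)
        (Inl ` {1..} \<union> range Inr)"
    and "m \<le> n"
  shows "(k m < 2 ^ (n - m) \<longrightarrow> measure M (rhaA (space M) S C n m) = 0)
       \<and> (2 ^ (n - m) \<le> k m \<and> m < n \<longrightarrow>
            measure M (rhaA (space M) S C n m) =
              measure M (rhaA (space M) S C n (m + 1)) *
              ((\<Prod>i<2 ^ (n - m). real (k m) - real i) /
               (\<Prod>i<2 ^ (n - m - 1). real (k m) ^ 2 - real i)))"
proof -
  interpret rha k M S C
    using assms by (intro rha.intro perplexities.intro rha_axioms.intro) auto
  show ?thesis
    using prob_rhaA_eq_0[OF \<open>m \<le> n\<close>] prob_rhaA_recursion[of m n]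
    by (simp add: falling_def)
qed

end
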